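(* Let $\eta>0$ and let $\{\mathbf{x}_j\}_{j=1}^m\subseteq\mathcal{X}_d$ be a finite set of points with $\|\mathbf{x}_i-\mathbf{x}_j\|_2\ge\eta$ for all $i\ne j$. Then for each $j\in[m]$ there exists a unit vector $\mathbf{v}_j\in\mathbb{R}^{2d}$ such that $\mathbf{v}_j^\top\mathbf{x}_j=\sqrt2$ and $\mathbf{x}_j$ is the only point of $\{\mathbf{x}_i\}_{i=1}^m$ contained in $T_j:=\{\mathbf{x}\in\mathbb{R}^{2d}:|\mathbf{v}_j^\top\mathbf{x}-\sqrt2|<\frac{\eta^2}{2\sqrt2}\}$.
   Context: $\mathcal{X}_d=\mathbb{S}^{d-1}\times\mathbb{S}^{d-1}\subset\mathbb{R}^{2d}$. *)

theory Defs
  imports "HOL-Analysis.Analysis"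
begin

text \<open>R^{2d} is modelled as the product real^'d \<times> real^'d, whose inner product
  and norm are the Euclidean ones of R^{2d}.  X_d = S^{d-1} \<times> S^{d-1}.\<close>

definition X_d :: "((real^'d) \<times> (real^'d)) set" where
  "X_d = sphere 0 1 \<times> sphere 0 1"

end

theory Submission
  imports Defs
begin

text \<open>Every point of X_d has norm sqrt 2, so one takes v_j = x_j / sqrt 2. For points y, z on a
  sphere of radius r, the polarisation identity gives r - <y/r, z> = |z - y|^2 / (2r); hence
  x_i lies in the slab T_j exactly when |x_i - x_j| < \<eta>, which by separation means x_i = x_j.\<close>

lemma norm_X_d: "y \<in> X_d \<Longrightarrow> norm y = sqrt 2"
  by (auto simp: X_d_def norm_Pair)

lemma inner_scaleR_sphere:
  fixes y z :: "'a::real_inner"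
  assumes "norm y = r" "norm z = r" "r > 0"
  shows "inner (y /\<^sub>R r) z = r - (norm (z - y))\<^sup>2 / (2 * r)"
proof -
  have "(norm (z - y))\<^sup>2 = inner z z + inner y y - 2 * inner y z"
    by (simp add: power2_norm_eq_inner inner_diff_left inner_diff_right inner_commute)
  also have "\<dots> = 2 * r\<^sup>2 - 2 * inner y z"
    using assms(1,2) by (simp add: dot_square_norm)
  finally have "(norm (z - y))\<^sup>2 = 2 * r\<^sup>2 - 2 * inner y z" .
  then show ?thesis
    using assms(3) by (simp add: field_simps power2_eq_square)
qed

lemma sphere_slab_iff_dist_less:
  fixes y z :: "'a::real_inner"
  assumes "norm y = r" "norm z = r" "r > 0" "\<eta> > 0"
  shows "\<bar>inner (y /\<^sub>R r) z - r\<bar> < \<eta>\<^sup>2 / (2 * r) \<longleftrightarrow> norm (z - y) < \<eta>"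
proof -
  have "\<bar>inner (y /\<^sub>R r) z - r\<bar> = (norm (z - y))\<^sup>2 / (2 * r)"
    using inner_scaleR_sphere[OF assms(1-3)] assms(3) by simp
  also have "\<dots> < \<eta>\<^sup>2 / (2 * r) \<longleftrightarrow> (norm (z - y))\<^sup>2 < \<eta>\<^sup>2"
    using assms(3) by (simp add: divide_less_cancel)
  also have "\<dots> \<longleftrightarrow> norm (z - y) < \<eta>"
    using power_mono_iff[of "norm (z - y)" \<eta> 2] assms(4) by (simp add: not_le[symmetric])
  finally show ?thesis .
qed

theorem lemma17:
  fixes \<eta> :: real and m :: nat and x :: "nat \<Rightarrow> (real^'d) \<times> (real^'d)"
  assumes "\<eta> > 0"
    and "\<And>j. j \<in> {1..m} \<Longrightarrow> x j \<in> X_d"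
    and "\<And>i j. i \<in> {1..m} \<Longrightarrow> j \<in> {1..m} \<Longrightarrow> i \<noteq> j \<Longrightarrow> norm (x i - x j) \<ge> \<eta>"
  shows "\<forall>j\<in>{1..m}. \<exists>v :: (real^'d) \<times> (real^'d). norm v = 1 \<and> inner v (x j) = sqrt 2 \<and>
           (\<forall>i\<in>{1..m}. \<bar>inner v (x i) - sqrt 2\<bar> < \<eta>\<^sup>2 / (2 * sqrt 2) \<longleftrightarrow> x i = x j)"
proof
  fix j assume j: "j \<in> {1..m}"
  have norm_xj: "norm (x j) = sqrt 2" using assms(2)[OF j] by (rule norm_X_d)
  define v where "v = x j /\<^sub>R sqrt 2"
  have "norm v = 1" using norm_xj by (simp add: v_def)
  moreover have "inner v (x j) = sqrt 2"
    using inner_scaleR_sphere[OF norm_xj norm_xj] by (simp add: v_def)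
  moreover have "\<bar>inner v (x i) - sqrt 2\<bar> < \<eta>\<^sup>2 / (2 * sqrt 2) \<longleftrightarrow> x i = x j"
    if i: "i \<in> {1..m}" for i
  proof -
    have "norm (x i - x j) < \<eta> \<longleftrightarrow> x i = x j"
      using assms(1) assms(3)[OF i j] by force
    then show ?thesis
      using sphere_slab_iff_dist_less[OF norm_xj norm_X_d[OF assms(2)[OF i]] _ assms(1)]
      by (simp add: v_def)
  qed
  ultimately show "\<exists>v. norm v = 1 \<and> inner v (x j) = sqrt 2 \<and>
           (\<forall>i\<in>{1..m}. \<bar>inner v (x i) - sqrt 2\<bar> < \<eta>\<^sup>2 / (2 * sqrt 2) \<longleftrightarrow> x i = x j)"
    by blast
qed

end
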